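(* Let $G$ be a connected graph with $n\ge2$ vertices and $m$ edges, and assume $\gamma_n=0$ (i.e. $\frac{2m}{n}$ is a $Q$-eigenvalue of $G$). Then $$QE(G)\ \ge\ \frac{2m+M_1-\frac{4m^2}{n}}{\gamma_1},$$ with equality if and only if $G\cong K_{\frac n2,\frac n2}$.
   Context: All graphs are finite, simple and undirected. For a graph $G$ with $n$ vertices and $m$ edges, let $q_1\ge\cdots\ge q_n\ge0$ be the eigenvalues of the signless Laplacian $Q(G)=D(G)+A(G)$ ($D(G)$ the diagonal degree matrix, $A(G)$ the adjacency matrix). The signless Laplacian energy is $QE(G)=\sum_{i=1}^n|q_i-\frac{2m}{n}|$. $M_1=\sum_{v}d(v)^2$ is the first Zagreb index. Let $\gamma_1\ge\gamma_2\ge\cdots\ge\gamma_n\ge0$ denote the numbers $|q_i-\frac{2m}{n}|$, $i=1,\dots,n$, arranged in nonincreasing order. *)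

theory Defs
  imports "Jordan_Normal_Form.Char_Poly" "HOL-Computational_Algebra.Polynomial"
begin

definition simple_graph :: "nat \<Rightarrow> (nat \<Rightarrow> nat \<Rightarrow> bool) \<Rightarrow> bool" where
  "simple_graph n E \<longleftrightarrow> (\<forall>i j. E i j \<longrightarrow> i < n \<and> j < n) \<and>
     (\<forall>i j. E i j \<longrightarrow> E j i) \<and> (\<forall>i. \<not> E i i)"

definition connected_graph :: "nat \<Rightarrow> (nat \<Rightarrow> nat \<Rightarrow> bool) \<Rightarrow> bool" where
  "connected_graph n E \<longleftrightarrow> (\<forall>i<n. \<forall>j<n. E\<^sup>*\<^sup>* i j)"

definition degree :: "nat \<Rightarrow> (nat \<Rightarrow> nat \<Rightarrow> bool) \<Rightarrow> nat \<Rightarrow> nat" where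
  "degree n E i = card {j. j < n \<and> E i j}"

definition num_edges :: "nat \<Rightarrow> (nat \<Rightarrow> nat \<Rightarrow> bool) \<Rightarrow> nat" where
  "num_edges n E = card {{i, j} | i j. i < n \<and> j < n \<and> E i j}"

definition first_zagreb :: "nat \<Rightarrow> (nat \<Rightarrow> nat \<Rightarrow> bool) \<Rightarrow> nat" where
  "first_zagreb n E = (\<Sum>i<n. (degree n E i)^2)"

definition signless_laplacian :: "nat \<Rightarrow> (nat \<Rightarrow> nat \<Rightarrow> bool) \<Rightarrow> real mat" where
  "signless_laplacian n E = mat n n (\<lambda>(i, j).
      (if i = j then real (degree n E i) else 0) + (if E i j then 1 else 0))"

definition Q_eigenvalues :: "nat \<Rightarrow> (nat \<Rightarrow> nat \<Rightarrow> bool) \<Rightarrow> real multiset" where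
  "Q_eigenvalues n E = proots (char_poly (signless_laplacian n E))"

definition avg_deg :: "nat \<Rightarrow> (nat \<Rightarrow> nat \<Rightarrow> bool) \<Rightarrow> real" where
  "avg_deg n E = 2 * real (num_edges n E) / real n"

definition QE :: "nat \<Rightarrow> (nat \<Rightarrow> nat \<Rightarrow> bool) \<Rightarrow> real" where
  "QE n E = (\<Sum>q\<in>#Q_eigenvalues n E. \<bar>q - avg_deg n E\<bar>)"

text \<open>gamma_1 = largest, gamma_n = smallest of the numbers |q_i - 2m/n|.\<close>
definition gamma_max :: "nat \<Rightarrow> (nat \<Rightarrow> nat \<Rightarrow> bool) \<Rightarrow> real" where
  "gamma_max n E = Max ((\<lambda>q. \<bar>q - avg_deg n E\<bar>) ` set_mset (Q_eigenvalues n E))"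

definition gamma_min :: "nat \<Rightarrow> (nat \<Rightarrow> nat \<Rightarrow> bool) \<Rightarrow> real" where
  "gamma_min n E = Min ((\<lambda>q. \<bar>q - avg_deg n E\<bar>) ` set_mset (Q_eigenvalues n E))"

definition graph_iso :: "'a set \<Rightarrow> ('a \<Rightarrow> 'a \<Rightarrow> bool) \<Rightarrow> 'b set \<Rightarrow> ('b \<Rightarrow> 'b \<Rightarrow> bool) \<Rightarrow> bool" where
  "graph_iso V1 E1 V2 E2 \<longleftrightarrow> (\<exists>f. bij_betw f V1 V2 \<and>
      (\<forall>u\<in>V1. \<forall>v\<in>V1. E1 u v \<longleftrightarrow> E2 (f u) (f v)))"

definition complete_bipartite_edge :: "nat \<Rightarrow> nat \<Rightarrow> nat \<Rightarrow> nat \<Rightarrow> bool" where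
  "complete_bipartite_edge p q u v \<longleftrightarrow> u < p + q \<and> v < p + q \<and> ((u < p) \<noteq> (v < p))"

end

(* Let d = 2m/n and let q_1, ..., q_n be the Q-eigenvalues. Traces of Q and Q^2 give
   sum (q_i - d)^2 = 2m + M_1 - 4m^2/n, and since every |q_i - d| is at most gamma_1,
   sum (q_i - d)^2 <= gamma_1 * sum |q_i - d| = gamma_1 * QE, with equality iff every |q_i - d|
   is 0 or gamma_1.  In that case N = Q - d I satisfies N^3 = gamma_1^2 N.  Its row sums
   u_i = 2 deg(i) - d then obey sum u_i^2 <= n gamma_1^2 <= n d^2 (gamma_1 <= d because Q is
   positive semidefinite and some q_i equals d - gamma_1), while sum u_i = n d; hence G is
   d-regular and gamma_1 = d.  Now N = A and A^3 = d^2 A: for every edge ab each neighbour of a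
   is adjacent to each neighbour of b, which makes a connected graph K_{d,d}.  Conversely the
   Q-spectrum of K_{h,h} lies in {0, h, 2h}.
   Traces of polynomials in Q are evaluated on a Schur triangularization of Q. *)

theory Submission
  imports Defs "Jordan_Normal_Form.Schur_Decomposition"
begin

section \<open>Traces and triangular forms\<close>

definition mat_trace :: "'a :: comm_ring_1 mat \<Rightarrow> 'a" where
  "mat_trace A = (\<Sum>i<dim_row A. A $$ (i, i))"

lemma index_mult_mat_sum:
  "A \<in> carrier_mat n k \<Longrightarrow> B \<in> carrier_mat k m \<Longrightarrow> i < n \<Longrightarrow> j < m \<Longrightarrow>
   (A * B) $$ (i, j) = (\<Sum>l<k. A $$ (i, l) * B $$ (l, j))"
  by (auto simp: scalar_prod_def lessThan_atLeast0 intro!: sum.cong)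

lemma index_mult_mat_cube:
  assumes M: "M \<in> carrier_mat n n" and "i < n" "j < n"
  shows "(M * M * M) $$ (i, j) = (\<Sum>k<n. \<Sum>l<n. M $$ (i, k) * M $$ (k, l) * M $$ (l, j))"
proof -
  have "(M * M * M) $$ (i, j) = (\<Sum>l<n. (M * M) $$ (i, l) * M $$ (l, j))"
    using assms by (intro index_mult_mat_sum) auto
  also have "\<dots> = (\<Sum>l<n. (\<Sum>k<n. M $$ (i, k) * M $$ (k, l)) * M $$ (l, j))"
    by (rule sum.cong[OF refl]) (simp only: index_mult_mat_sum[OF M M \<open>i < n\<close>] lessThan_iff)
  also have "\<dots> = (\<Sum>l<n. \<Sum>k<n. M $$ (i, k) * M $$ (k, l) * M $$ (l, j))"
    by (simp add: sum_distrib_right)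
  also have "\<dots> = (\<Sum>k<n. \<Sum>l<n. M $$ (i, k) * M $$ (k, l) * M $$ (l, j))"
    by (rule sum.swap)
  finally show ?thesis .
qed

lemma mat_trace_mult_comm:
  assumes A: "A \<in> carrier_mat n m" and B: "B \<in> carrier_mat m n"
  shows "mat_trace (A * B) = mat_trace (B * A)"
proof -
  have "mat_trace (A * B) = (\<Sum>i<n. \<Sum>k<m. A $$ (i, k) * B $$ (k, i))"
    unfolding mat_trace_def using A B index_mult_mat_sum[OF A B] by simp
  also have "\<dots> = (\<Sum>k<m. \<Sum>i<n. B $$ (k, i) * A $$ (i, k))"
    by (subst sum.swap) (simp add: mult.commute)
  also have "\<dots> = mat_trace (B * A)"
    unfolding mat_trace_def using A B index_mult_mat_sum[OF B A] by simp
  finally show ?thesis .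
qed

lemma symmetric_matD:
  "transpose_mat X = X \<Longrightarrow> X \<in> carrier_mat n n \<Longrightarrow> i < n \<Longrightarrow> j < n \<Longrightarrow> X $$ (i, j) = X $$ (j, i)"
  by (metis carrier_matD index_transpose_mat(1))

lemma transpose_smult_mat: "transpose_mat (c \<cdot>\<^sub>m A) = c \<cdot>\<^sub>m transpose_mat A"
  by (intro eq_matI) auto

lemma transpose_mat_cube:
  fixes A :: "'a :: comm_ring_1 mat"
  assumes A: "A \<in> carrier_mat n n" and sym: "transpose_mat A = A"
  shows "transpose_mat (A * A * A) = A * A * A"
proof -
  have "transpose_mat (A * A * A) = A * (A * A)"
    using transpose_mult[OF mult_carrier_mat[OF A A] A] transpose_mult[OF A A] sym by simp
  also have "\<dots> = A * A * A" using A by (simp add: assoc_mult_mat[of _ n n _ n _ n])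
  finally show ?thesis .
qed

lemma eq_smult_if_add_smult_eq_0:
  fixes A :: "'a :: comm_ring_1 mat"
  assumes eq: "A + (- c) \<cdot>\<^sub>m B = 0\<^sub>m n n" and A: "A \<in> carrier_mat n n" and B: "B \<in> carrier_mat n n"
  shows "A = c \<cdot>\<^sub>m B"
proof (rule eq_matI)
  fix i j assume "i < dim_row (c \<cdot>\<^sub>m B)" "j < dim_col (c \<cdot>\<^sub>m B)"
  then have "i < n" "j < n" using B by auto
  then have "A $$ (i, j) + - c * B $$ (i, j) = 0"
    using arg_cong[OF eq, of "\<lambda>M. M $$ (i, j)"] A B by simp
  then show "A $$ (i, j) = (c \<cdot>\<^sub>m B) $$ (i, j)" using \<open>i < n\<close> \<open>j < n\<close> B
    by (simp add: add_uminus_conv_diff)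
qed (use A B in auto)

lemma symmetric_mat_eq_0_if_trace_square_eq_0:
  fixes R :: "real mat"
  assumes R: "R \<in> carrier_mat n n" and "transpose_mat R = R" and tr: "mat_trace (R * R) = 0"
  shows "R = 0\<^sub>m n n"
proof (rule eq_matI)
  note sym = symmetric_matD[OF assms(2) R]
  fix i j assume i: "i < dim_row (0\<^sub>m n n)" and j: "j < dim_col (0\<^sub>m n n)"
  have "mat_trace (R * R) = (\<Sum>i<n. \<Sum>j<n. (R $$ (i, j))\<^sup>2)"
    unfolding mat_trace_def using R index_mult_mat_sum[OF R R]
    by (auto simp: sym power2_eq_square intro!: sum.cong)
  then have "\<forall>i\<in>{..<n}. \<forall>j\<in>{..<n}. (R $$ (i, j))\<^sup>2 = 0"
    using tr by (simp add: sum_nonneg sum_nonneg_eq_0_iff)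
  then show "R $$ (i, j) = 0\<^sub>m n n $$ (i, j)" using i j by simp
qed (use R in auto)

lemma sum_mult_sum_symmetric:
  fixes m :: "nat \<Rightarrow> nat \<Rightarrow> real"
  assumes sym: "\<And>i j. i < n \<Longrightarrow> j < n \<Longrightarrow> m i j = m j i"
  shows "(\<Sum>i<n. y i * (\<Sum>j<n. m i j * x j)) = (\<Sum>j<n. x j * (\<Sum>i<n. m j i * y i))"
proof -
  have "(\<Sum>i<n. y i * (\<Sum>j<n. m i j * x j)) = (\<Sum>j<n. \<Sum>i<n. y i * (m i j * x j))"
    unfolding sum_distrib_left by (rule sum.swap)
  also have "\<dots> = (\<Sum>j<n. x j * (\<Sum>i<n. m j i * y i))"
    unfolding sum_distrib_left using sym by (intro sum.cong refl) (simp add: mult_ac)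
  finally show ?thesis .
qed

text \<open>For symmetric \<open>M\<close> with \<open>M\<^sup>3 = g\<^sup>2 M\<close> the eigenvalues lie in \<open>{0, g, -g}\<close>, so
  \<open>\<parallel>M 1\<parallel>\<^sup>2 \<le> g\<^sup>2 n\<close>; the proof compares \<open>u = M 1\<close> with \<open>w = M u\<close>.\<close>

lemma sum_row_sums_power2_le_if_cube_eq:
  fixes M :: "real mat"
  assumes M: "M \<in> carrier_mat n n" and sym: "transpose_mat M = M"
    and cube: "M * M * M = g\<^sup>2 \<cdot>\<^sub>m M" and "g \<noteq> 0"
  shows "(\<Sum>i<n. (\<Sum>j<n. M $$ (i, j))\<^sup>2) \<le> real n * g\<^sup>2"
proof -
  define m where "m i j = M $$ (i, j)" for i j
  have m_sym: "m i j = m j i" if "i < n" "j < n" for i j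
    using symmetric_matD[OF sym M that] unfolding m_def .
  define u where "u i = (\<Sum>j<n. m i j)" for i
  define w where "w i = (\<Sum>j<n. m i j * u j)" for i
  have m_w: "(\<Sum>i<n. m j i * w i) = g\<^sup>2 * u j" if j: "j < n" for j
  proof -
    have "(\<Sum>i<n. m j i * w i) = (\<Sum>i<n. \<Sum>k<n. \<Sum>l<n. m j i * m i k * m k l)"
      unfolding w_def u_def by (simp add: sum_distrib_left mult.assoc)
    also have "\<dots> = (\<Sum>l<n. \<Sum>i<n. \<Sum>k<n. m j i * m i k * m k l)"
      by (subst sum.swap, rule sum.cong[OF refl], rule sum.swap)
    also have "\<dots> = (\<Sum>l<n. g\<^sup>2 * m j l)"
      using index_mult_mat_cube[OF M j] cube j M unfolding m_def by (intro sum.cong refl) simp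
    finally show ?thesis unfolding u_def by (simp add: sum_distrib_left)
  qed
  have sum_w: "(\<Sum>i<n. w i) = (\<Sum>j<n. (u j)\<^sup>2)"
    using sum_mult_sum_symmetric[of n m "\<lambda>_. 1" u] m_sym unfolding w_def u_def
    by (simp add: power2_eq_square)
  have "(\<Sum>i<n. (w i)\<^sup>2) = (\<Sum>i<n. w i * (\<Sum>j<n. m i j * u j))"
    unfolding power2_eq_square by (subst (2) w_def) simp
  also have "\<dots> = (\<Sum>j<n. u j * (\<Sum>i<n. m j i * w i))"
    by (rule sum_mult_sum_symmetric[OF m_sym])
  also have "\<dots> = (\<Sum>j<n. u j * (g\<^sup>2 * u j))" by (intro sum.cong refl) (simp add: m_w)
  also have "\<dots> = g\<^sup>2 * (\<Sum>j<n. (u j)\<^sup>2)"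
    by (simp add: sum_distrib_left power2_eq_square mult_ac)
  finally have sum_w_power2: "(\<Sum>i<n. (w i)\<^sup>2) = g\<^sup>2 * (\<Sum>j<n. (u j)\<^sup>2)" .
  have "0 \<le> (\<Sum>i<n. (g\<^sup>2 - w i)\<^sup>2)" by (intro sum_nonneg) auto
  also have "\<dots> = real n * g\<^sup>2 * g\<^sup>2 - 2 * g\<^sup>2 * (\<Sum>i<n. w i) + (\<Sum>i<n. (w i)\<^sup>2)"
    by (simp add: power2_diff sum.distrib sum_subtractf sum_distrib_left mult.assoc)
  also have "\<dots> = g\<^sup>2 * (real n * g\<^sup>2 - (\<Sum>j<n. (u j)\<^sup>2))"
    unfolding sum_w sum_w_power2 by (simp add: algebra_simps)
  finally have "(\<Sum>j<n. (u j)\<^sup>2) \<le> real n * g\<^sup>2"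
    using \<open>g \<noteq> 0\<close> by (simp add: zero_le_mult_iff)
  then show ?thesis unfolding u_def m_def .
qed

lemma upper_triangular_mult:
  assumes T: "T \<in> carrier_mat n n" and S: "S \<in> carrier_mat n n"
    and "upper_triangular T" "upper_triangular S"
  shows "upper_triangular (T * S)" and "\<And>i. i < n \<Longrightarrow> (T * S) $$ (i, i) = T $$ (i, i) * S $$ (i, i)"
proof -
  have vanish: "T $$ (i, k) * S $$ (k, j) = 0" if "i < n" "k < n" "j < n" "j < i \<or> (j = i \<and> k \<noteq> i)" for i j k
    using that assms upper_triangularD[of T k i] upper_triangularD[of S j k] by fastforce
  show "upper_triangular (T * S)"
    using T S index_mult_mat_sum[OF T S] vanish by (intro upper_triangularI) (auto intro!: sum.neutral)
  fix i assume i: "i < n"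
  have "(T * S) $$ (i, i) = (\<Sum>k<n. T $$ (i, k) * S $$ (k, i))"
    by (rule index_mult_mat_sum[OF T S i i])
  also have "\<dots> = T $$ (i, i) * S $$ (i, i)"
    using i vanish[of i _ i] by (subst sum.remove[of _ i]) (auto intro!: sum.neutral)
  finally show "(T * S) $$ (i, i) = T $$ (i, i) * S $$ (i, i)" .
qed

text \<open>\<open>triangular_form A f\<close> says that \<open>P\<close> brings \<open>A\<close> to upper triangular form with diagonal
  \<open>map f es\<close>; it is closed under sums, scalar multiples and products, so the trace of any
  polynomial in \<open>A\<close> can be read off from \<open>es\<close>.\<close>

locale triangularization =
  fixes n :: nat and P P' :: "'a :: comm_ring_1 mat" and es :: "'a list"
  assumes P_carrier: "P \<in> carrier_mat n n" and P'_carrier: "P' \<in> carrier_mat n n"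
    and P_P': "P * P' = 1\<^sub>m n" and P'_P: "P' * P = 1\<^sub>m n" and length_es: "length es = n"
begin

definition triangular_form :: "'a mat \<Rightarrow> ('a \<Rightarrow> 'a) \<Rightarrow> bool" where
  "triangular_form A f \<longleftrightarrow> (\<exists>T \<in> carrier_mat n n. upper_triangular T \<and> A = P * T * P' \<and>
      (\<forall>i<n. T $$ (i, i) = f (es ! i)))"

lemma triangular_formE:
  assumes "triangular_form A f"
  obtains T where "T \<in> carrier_mat n n" "upper_triangular T" "A = P * T * P'"
    "\<And>i. i < n \<Longrightarrow> T $$ (i, i) = f (es ! i)"
  using assms unfolding triangular_form_def by blast

lemma triangular_formI:
  "T \<in> carrier_mat n n \<Longrightarrow> upper_triangular T \<Longrightarrow> A = P * T * P' \<Longrightarrow>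
   (\<And>i. i < n \<Longrightarrow> T $$ (i, i) = f (es ! i)) \<Longrightarrow> triangular_form A f"
  unfolding triangular_form_def by blast

lemma triangular_form_one: "triangular_form (1\<^sub>m n) (\<lambda>_. 1)"
  using P_carrier P_P' by (intro triangular_formI[of "1\<^sub>m n"]) auto

lemma triangular_form_add:
  assumes "triangular_form A f" "triangular_form B g"
  shows "triangular_form (A + B) (\<lambda>x. f x + g x)"
proof -
  obtain T S where T: "T \<in> carrier_mat n n" "upper_triangular T" "A = P * T * P'"
      "\<And>i. i < n \<Longrightarrow> T $$ (i, i) = f (es ! i)"
    and S: "S \<in> carrier_mat n n" "upper_triangular S" "B = P * S * P'"
      "\<And>i. i < n \<Longrightarrow> S $$ (i, i) = g (es ! i)"
    using assms by (meson triangular_formE)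
  have "A + B = (P * T + P * S) * P'"
    using P_carrier P'_carrier T(1) S(1) unfolding T(3) S(3)
    by (subst add_mult_distrib_mat[of _ n n]) auto
  also have "\<dots> = P * (T + S) * P'"
    using P_carrier P'_carrier T(1) S(1) by (subst mult_add_distrib_mat[of _ n n]) auto
  finally have "A + B = P * (T + S) * P'" .
  moreover have "upper_triangular (T + S)"
    using T(1,2) S(1,2) unfolding upper_triangular_def by auto
  ultimately show ?thesis using T S by (intro triangular_formI[of "T + S"]) auto
qed

lemma triangular_form_smult:
  assumes "triangular_form A f"
  shows "triangular_form (c \<cdot>\<^sub>m A) (\<lambda>x. c * f x)"
proof -
  obtain T where T: "T \<in> carrier_mat n n" "upper_triangular T" "A = P * T * P'"
      "\<And>i. i < n \<Longrightarrow> T $$ (i, i) = f (es ! i)"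
    using assms by (meson triangular_formE)
  have "c \<cdot>\<^sub>m A = P * (c \<cdot>\<^sub>m T) * P'"
    using P_carrier P'_carrier T(1) unfolding T(3)
    by (metis mult_smult_distrib mult_smult_assoc_mat mult_carrier_mat smult_carrier_mat)
  moreover have "upper_triangular (c \<cdot>\<^sub>m T)"
    using T(1,2) unfolding upper_triangular_def by auto
  ultimately show ?thesis using T by (intro triangular_formI[of "c \<cdot>\<^sub>m T"]) auto
qed

lemma triangular_form_mult:
  assumes "triangular_form A f" "triangular_form B g"
  shows "triangular_form (A * B) (\<lambda>x. f x * g x)"
proof -
  obtain T S where T: "T \<in> carrier_mat n n" "upper_triangular T" "A = P * T * P'"
      "\<And>i. i < n \<Longrightarrow> T $$ (i, i) = f (es ! i)"
    and S: "S \<in> carrier_mat n n" "upper_triangular S" "B = P * S * P'"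
      "\<And>i. i < n \<Longrightarrow> S $$ (i, i) = g (es ! i)"
    using assms by (meson triangular_formE)
  have "A * B = P * T * (P' * P) * S * P'"
    using P_carrier P'_carrier T(1) S(1) unfolding T(3) S(3)
    by (simp add: assoc_mult_mat[of _ n n _ n _ n])
  also have "\<dots> = P * (T * S) * P'"
    using P_carrier P'_carrier T(1) S(1) unfolding P'_P
    by (simp add: assoc_mult_mat[of _ n n _ n _ n])
  finally show ?thesis
    using T S upper_triangular_mult[OF T(1) S(1) T(2) S(2)] by (intro triangular_formI[of "T * S"]) auto
qed

lemma mat_trace_triangular_form:
  assumes "triangular_form A f"
  shows "mat_trace A = (\<Sum>e\<leftarrow>es. f e)"
proof -
  obtain T where T: "T \<in> carrier_mat n n" "A = P * T * P'"
      "\<And>i. i < n \<Longrightarrow> T $$ (i, i) = f (es ! i)"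
    using assms by (meson triangular_formE)
  have "mat_trace A = mat_trace ((T * P') * P)"
    using P_carrier P'_carrier T(1) unfolding T(2)
    by (subst mat_trace_mult_comm[symmetric, of _ n n]) (auto simp: assoc_mult_mat[of _ n n _ n _ n])
  also have "\<dots> = mat_trace T"
    using P_carrier P'_carrier T(1) by (simp add: assoc_mult_mat[of _ n n _ n _ n] P'_P)
  also have "\<dots> = (\<Sum>e\<leftarrow>es. f e)"
    using T(1,3) length_es unfolding mat_trace_def by (simp add: sum_list_sum_nth atLeast0LessThan)
  finally show ?thesis .
qed

end

lemma char_poly_root_eigenvector:
  fixes X :: "'a :: field mat"
  assumes X: "X \<in> carrier_mat n n" and root: "poly (char_poly X) e = 0"
  obtains v where "\<exists>i<n. v i \<noteq> 0" "\<And>i. i < n \<Longrightarrow> (\<Sum>j<n. X $$ (i, j) * v j) = e * v i"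
proof -
  have "eigenvalue X e" using eigenvalue_root_char_poly[OF X] root by simp
  then obtain v where v: "v \<in> carrier_vec n" "v \<noteq> 0\<^sub>v n" "X *\<^sub>v v = e \<cdot>\<^sub>v v"
    unfolding eigenvalue_def eigenvector_def using X by auto
  have "\<exists>i<n. v $ i \<noteq> 0" using v(1,2) by (metis eq_vecI carrier_vecD index_zero_vec)
  moreover have "(\<Sum>j<n. X $$ (i, j) * v $ j) = e * v $ i" if i: "i < n" for i
  proof -
    have "(\<Sum>j<n. X $$ (i, j) * v $ j) = (X *\<^sub>v v) $ i"
      using i X v(1) by (auto simp: scalar_prod_def lessThan_atLeast0 intro!: sum.cong)
    also have "\<dots> = e * v $ i" using v(1,3) i by simp
    finally show ?thesis .
  qed
  ultimately show ?thesis by (intro that[of "\<lambda>i. v $ i"]) auto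
qed

lemma real_symmetric_eigenvalue_real:
  fixes X :: "real mat"
  assumes X: "X \<in> carrier_mat n n" and "transpose_mat X = X"
    and root: "poly (char_poly (map_mat complex_of_real X)) c = 0"
  shows "Im c = 0"
proof -
  note sym = symmetric_matD[OF assms(2) X]
  obtain v where v: "\<exists>i<n. v i \<noteq> 0" and row: "\<And>i. i < n \<Longrightarrow> (\<Sum>j<n. of_real (X $$ (i, j)) * v j) = c * v i"
    using char_poly_root_eigenvector[of "map_mat complex_of_real X" n c] X root by auto
  define S where "S = (\<Sum>i<n. \<Sum>j<n. cnj (v i) * of_real (X $$ (i, j)) * v j)"
  define N where "N = (\<Sum>i<n. (cmod (v i))\<^sup>2)"
  have "S = (\<Sum>i<n. cnj (v i) * (\<Sum>j<n. of_real (X $$ (i, j)) * v j))"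
    unfolding S_def by (simp add: sum_distrib_left mult.assoc)
  also have "\<dots> = (\<Sum>i<n. c * (cnj (v i) * v i))" by (rule sum.cong) (auto simp: row)
  also have "\<dots> = c * of_real N" unfolding N_def of_real_sum sum_distrib_left
    by (rule sum.cong[OF refl]) (metis complex_norm_square of_real_power mult.commute)
  finally have S: "S = c * of_real N" .
  have "cnj S = (\<Sum>i<n. \<Sum>j<n. cnj (v j) * of_real (X $$ (j, i)) * v i)"
    unfolding S_def by (auto intro!: sum.cong simp: sym mult.commute mult.left_commute)
  also have "\<dots> = S" unfolding S_def by (rule sum.swap)
  finally have "Im S = 0" by (metis cnj.simps(2) complex_cnj_cancel_iff neg_equal_zero)
  moreover have "N > 0"
  proof -
    obtain i where i: "i < n" "v i \<noteq> 0" using v by blast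
    have "(cmod (v i))\<^sup>2 \<le> N"
      unfolding N_def by (rule member_le_sum) (use i in auto)
    moreover have "(cmod (v i))\<^sup>2 > 0" using i by simp
    ultimately show ?thesis by linarith
  qed
  ultimately show "Im c = 0" using S by simp
qed

lemma real_symmetric_char_poly_splits:
  fixes X :: "real mat"
  assumes X: "X \<in> carrier_mat n n" and sym: "transpose_mat X = X"
  obtains es where "length es = n" "char_poly X = (\<Prod>e\<leftarrow>es. [:-e, 1:])"
proof -
  interpret of_real_poly: map_poly_inj_comm_ring_hom complex_of_real by unfold_locales
  let ?Xc = "map_mat complex_of_real X"
  obtain cs where cs: "char_poly ?Xc = (\<Prod>c\<leftarrow>cs. [:-c, 1:])" "length cs = n"
    using char_poly_factorized[of ?Xc n] X by auto
  have real: "Im c = 0" if "c \<in> set cs" for c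
    using real_symmetric_eigenvalue_real[OF X sym] linear_poly_root[OF that] cs(1) by metis
  have "map_poly complex_of_real (\<Prod>e\<leftarrow>map Re cs. [:-e, 1:]) = (\<Prod>c\<leftarrow>cs. [:-c, 1:])"
    using real
  proof (induct cs)
    case (Cons c cs)
    then have "map_poly complex_of_real [:-Re c, 1:] = [:-c, 1:]"
      by (simp add: complex_eq_iff)
    with Cons show ?case by (simp only: list.map prod_list.Cons of_real_poly.hom_mult) simp
  qed simp
  also have "\<dots> = map_poly complex_of_real (char_poly X)"
    using cs(1) of_real_hom.char_poly_hom[OF X] by metis
  finally have "char_poly X = (\<Prod>e\<leftarrow>map Re cs. [:-e, 1:])"
    using of_real_poly.injectivity by metis
  then show ?thesis using cs(2) by (intro that[of "map Re cs"]) auto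
qed

lemma real_symmetric_triangularization:
  fixes X :: "real mat"
  assumes X: "X \<in> carrier_mat n n" and sym: "transpose_mat X = X"
  obtains es P P' where "triangularization n P P' es" "char_poly X = (\<Prod>e\<leftarrow>es. [:-e, 1:])"
    "triangularization.triangular_form n P P' es X (\<lambda>x. x)"
proof -
  obtain es where es: "length es = n" "char_poly X = (\<Prod>e\<leftarrow>es. [:-e, 1:])"
    using real_symmetric_char_poly_splits[OF X sym] .
  obtain T P P' where schur: "schur_decomposition X es = (T, P, P')"
    by (cases "schur_decomposition X es") auto
  from schur_decomposition[OF X es(2) schur] have sim: "similar_mat_wit X T P P'"
    and T: "upper_triangular T" "diag_mat T = es" by auto
  note wit = similar_mat_witD2[OF X sim]
  interpret triangularization n P P' es
    using wit es(1) by unfold_locales auto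
  have "T $$ (i, i) = es ! i" if "i < n" for i
    using T(2) that wit(5) unfolding diag_mat_def by auto
  then have "triangular_form X (\<lambda>x. x)"
    using wit T(1) by (intro triangular_formI[of T]) auto
  with es(2) show ?thesis using triangularization_axioms that by blast
qed

lemma proots_prod_linear: "proots (\<Prod>e\<leftarrow>es. [:-e, 1:]) = mset (es :: real list)"
proof (induct es)
  case (Cons a es)
  have "proots (\<Prod>e\<leftarrow>a # es. [:-e, 1:]) = proots [:-a, 1:] + proots (\<Prod>e\<leftarrow>es. [:-e, 1:])"
    unfolding list.map prod_list.Cons by (rule proots_mult) (auto simp: prod_list_zero_iff)
  with Cons show ?case using proots_linear_factor[of "-a"] by simp
qed simp

lemma sum_list_power2_le_sum_list_abs_mult:
  fixes f :: "'a \<Rightarrow> real"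
  assumes bound: "\<And>e. e \<in> set es \<Longrightarrow> \<bar>f e\<bar> \<le> g"
  shows "(\<Sum>e\<leftarrow>es. (f e)\<^sup>2) \<le> (\<Sum>e\<leftarrow>es. \<bar>f e\<bar>) * g"
    and "(\<Sum>e\<leftarrow>es. (f e)\<^sup>2) = (\<Sum>e\<leftarrow>es. \<bar>f e\<bar>) * g \<longleftrightarrow> (\<forall>e\<in>set es. f e = 0 \<or> \<bar>f e\<bar> = g)"
proof -
  have gap: "(\<Sum>e\<leftarrow>es. \<bar>f e\<bar>) * g - (\<Sum>e\<leftarrow>es. (f e)\<^sup>2) = (\<Sum>e\<leftarrow>es. \<bar>f e\<bar> * (g - \<bar>f e\<bar>))"
  proof (induct es)
    case (Cons a es)
    have "\<bar>f a\<bar> * (g - \<bar>f a\<bar>) = \<bar>f a\<bar> * g - (f a)\<^sup>2"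
      by (simp add: right_diff_distrib power2_eq_square flip: abs_mult)
    with Cons show ?case by (simp add: algebra_simps)
  qed simp
  have nonneg: "\<And>x. x \<in> set (map (\<lambda>e. \<bar>f e\<bar> * (g - \<bar>f e\<bar>)) es) \<Longrightarrow> 0 \<le> x"
    using bound by auto
  then have "0 \<le> (\<Sum>e\<leftarrow>es. \<bar>f e\<bar> * (g - \<bar>f e\<bar>))" by (rule sum_list_nonneg)
  with gap show "(\<Sum>e\<leftarrow>es. (f e)\<^sup>2) \<le> (\<Sum>e\<leftarrow>es. \<bar>f e\<bar>) * g" by linarith
  have "(\<Sum>e\<leftarrow>es. (f e)\<^sup>2) = (\<Sum>e\<leftarrow>es. \<bar>f e\<bar>) * g \<longleftrightarrow>
      (\<Sum>e\<leftarrow>es. \<bar>f e\<bar> * (g - \<bar>f e\<bar>)) = 0"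
    using gap by linarith
  also have "\<dots> \<longleftrightarrow> (\<forall>e\<in>set es. \<bar>f e\<bar> * (g - \<bar>f e\<bar>) = 0)"
    using sum_list_nonneg_eq_0_iff[of "map (\<lambda>e. \<bar>f e\<bar> * (g - \<bar>f e\<bar>)) es", OF nonneg] by simp
  also have "\<dots> \<longleftrightarrow> (\<forall>e\<in>set es. f e = 0 \<or> \<bar>f e\<bar> = g)"
    by (intro ball_cong refl) (simp only: mult_eq_0_iff abs_eq_0 right_minus_eq, blast)
  finally show "(\<Sum>e\<leftarrow>es. (f e)\<^sup>2) = (\<Sum>e\<leftarrow>es. \<bar>f e\<bar>) * g \<longleftrightarrow> (\<forall>e\<in>set es. f e = 0 \<or> \<bar>f e\<bar> = g)" .
qed

lemma sum_list_power2_diff: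
  "(\<Sum>x\<leftarrow>xs. (x - c)\<^sup>2) = (\<Sum>x\<leftarrow>xs. x\<^sup>2) - 2 * c * (\<Sum>x\<leftarrow>xs. x) + real (length xs) * (c :: real)\<^sup>2"
  by (induct xs) (auto simp: power2_diff algebra_simps)

lemma power2_sum_le_card_mult_sum_power2:
  fixes x :: "nat \<Rightarrow> real"
  shows "(\<Sum>i<n. x i)\<^sup>2 \<le> real n * (\<Sum>i<n. (x i)\<^sup>2)"
proof -
  have "0 \<le> (\<Sum>i<n. \<Sum>j<n. (x i - x j)\<^sup>2)" by (intro sum_nonneg) auto
  also have "\<dots> = (\<Sum>i<n. \<Sum>j<n. (x i)\<^sup>2) + (\<Sum>i<n. \<Sum>j<n. (x j)\<^sup>2) - 2 * (\<Sum>i<n. \<Sum>j<n. x i * x j)"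
    by (simp add: power2_diff sum.distrib sum_subtractf sum_distrib_left mult.assoc)
  also have "(\<Sum>i<n. \<Sum>j<n. x i * x j) = (\<Sum>i<n. x i)\<^sup>2"
    by (simp add: power2_eq_square sum_product)
  also have "(\<Sum>i<n. \<Sum>j<n. (x i)\<^sup>2) = real n * (\<Sum>i<n. (x i)\<^sup>2)"
    by (simp add: sum_distrib_left)
  also have "(\<Sum>i<n. \<Sum>j<n. (x j)\<^sup>2) = real n * (\<Sum>i<n. (x i)\<^sup>2)"
    by simp
  finally show ?thesis by simp
qed

section \<open>Simple graphs and their signless Laplacian\<close>

lemma simple_graphD:
  assumes "simple_graph n E" "E i j"
  shows "i < n" "j < n" "E j i" "i \<noteq> j"
  using assms unfolding simple_graph_def by metis+

lemma simple_graph_irrefl: "simple_graph n E \<Longrightarrow> \<not> E i i"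
  unfolding simple_graph_def by blast

lemma degree_eq_sum_of_bool: "real (degree n E i) = (\<Sum>j<n. of_bool (E i j))"
proof -
  have "{..<n} \<inter> {j. E i j} = {j. j < n \<and> E i j}" by auto
  then show ?thesis unfolding degree_def by simp
qed

lemma sum_degree_eq_twice_num_edges:
  assumes simple: "simple_graph n E"
  shows "(\<Sum>i<n. degree n E i) = 2 * num_edges n E"
proof -
  define arcs where "arcs = {(i, j). i < n \<and> j < n \<and> E i j}"
  define up where "up = {(i, j). i < n \<and> j < n \<and> E i j \<and> i < j}"
  define down where "down = {(i, j). i < n \<and> j < n \<and> E i j \<and> j < i}"
  have fin: "finite up" "finite down"
    by (rule finite_subset[of _ "{..<n} \<times> {..<n}"], auto simp: up_def down_def)+
  have "arcs = Sigma {..<n} (\<lambda>i. {j. j < n \<and> E i j})" unfolding arcs_def by auto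
  then have "card arcs = (\<Sum>i<n. degree n E i)" unfolding degree_def by (simp add: card_SigmaI)
  moreover have "arcs = up \<union> down" "up \<inter> down = {}"
    using simple_graphD[OF simple] unfolding arcs_def up_def down_def by (auto, metis linorder_neqE_nat)
  moreover have "card down = card up"
  proof -
    have "down = prod.swap ` up"
      using simple_graphD[OF simple] unfolding up_def down_def by (auto simp: image_iff)
    then show ?thesis by (simp add: card_image)
  qed
  moreover have "card up = num_edges n E"
  proof -
    have "{{i, j} | i j. i < n \<and> j < n \<and> E i j} = (\<lambda>(i, j). {i, j}) ` up"
      using simple_graphD[OF simple] unfolding up_def
      by (auto simp: image_iff) (metis insert_commute linorder_neqE_nat)
    moreover have "inj_on (\<lambda>(i, j). {i, j}) up"
      unfolding up_def inj_on_def by (auto simp: doubleton_eq_iff)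
    ultimately show ?thesis unfolding num_edges_def by (simp add: card_image)
  qed
  ultimately show ?thesis using fin by (simp add: card_Un_disjoint)
qed

lemma sum_degree_real_eq_twice_num_edges:
  "simple_graph n E \<Longrightarrow> (\<Sum>i<n. real (degree n E i)) = 2 * real (num_edges n E)"
  using sum_degree_eq_twice_num_edges by (metis of_nat_mult of_nat_numeral of_nat_sum)

lemma connected_graph_has_neighbour:
  assumes simple: "simple_graph n E" and conn: "connected_graph n E" and "1 < n" "i < n"
  obtains j where "E i j"
proof -
  define k :: nat where "k = (if i = 0 then 1 else 0)"
  have "k < n" "k \<noteq> i" using assms(3,4) unfolding k_def by auto
  then have "E\<^sup>*\<^sup>* i k" "i \<noteq> k" using conn assms(4) unfolding connected_graph_def by auto
  then show ?thesis using that by (cases rule: converse_rtranclpE) auto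
qed

lemma connected_graph_closed_subset:
  assumes conn: "connected_graph n E" and "a < n" "a \<in> S"
    and closed: "\<And>u v. u \<in> S \<Longrightarrow> E u v \<Longrightarrow> v \<in> S"
  shows "{..<n} \<subseteq> S"
proof
  fix v assume "v \<in> {..<n}"
  then have "E\<^sup>*\<^sup>* a v" using conn \<open>a < n\<close> unfolding connected_graph_def by auto
  then show "v \<in> S" by (induct rule: rtranclp_induct) (use \<open>a \<in> S\<close> closed in blast)+
qed

lemma num_edges_pos:
  assumes simple: "simple_graph n E" and conn: "connected_graph n E" and "1 < n"
  shows "0 < num_edges n E"
proof -
  obtain j where "E 0 j" using connected_graph_has_neighbour[OF simple conn \<open>1 < n\<close>] \<open>1 < n\<close> by auto
  then have "0 < degree n E 0"
    using simple_graphD(2)[OF simple] unfolding degree_def by (auto simp: card_gt_0_iff)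
  also have "\<dots> \<le> (\<Sum>i<n. degree n E i)" by (rule member_le_sum) (use \<open>1 < n\<close> in auto)
  finally show ?thesis using sum_degree_eq_twice_num_edges[OF simple] by simp
qed

lemma signless_laplacian_carrier: "signless_laplacian n E \<in> carrier_mat n n"
  unfolding signless_laplacian_def by simp

lemma index_signless_laplacian:
  "i < n \<Longrightarrow> j < n \<Longrightarrow>
   signless_laplacian n E $$ (i, j) = (if i = j then real (degree n E i) else 0) + of_bool (E i j)"
  unfolding signless_laplacian_def by simp

lemma transpose_signless_laplacian:
  "simple_graph n E \<Longrightarrow> transpose_mat (signless_laplacian n E) = signless_laplacian n E"
proof (rule eq_matI)
  fix i j assume "simple_graph n E" "i < dim_row (signless_laplacian n E)" "j < dim_col (signless_laplacian n E)"
  then show "transpose_mat (signless_laplacian n E) $$ (i, j) = signless_laplacian n E $$ (i, j)"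
    using simple_graphD(3)[of n E i j] simple_graphD(3)[of n E j i]
    by (simp add: signless_laplacian_def)
qed (simp_all add: signless_laplacian_def)

context
  fixes n :: nat and E :: "nat \<Rightarrow> nat \<Rightarrow> bool"
  assumes simple: "simple_graph n E"
begin

lemma mat_trace_signless_laplacian: "mat_trace (signless_laplacian n E) = 2 * real (num_edges n E)"
proof -
  have "mat_trace (signless_laplacian n E) = (\<Sum>i<n. real (degree n E i))"
    unfolding mat_trace_def using simple_graph_irrefl[OF simple]
    by (auto simp: signless_laplacian_def intro!: sum.cong)
  then show ?thesis using sum_degree_real_eq_twice_num_edges[OF simple] by simp
qed

lemma mat_trace_signless_laplacian_square:
  "mat_trace (signless_laplacian n E * signless_laplacian n E) =
   real (first_zagreb n E) + 2 * real (num_edges n E)"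
proof -
  let ?Q = "signless_laplacian n E"
  have entry: "?Q $$ (i, j) * ?Q $$ (j, i) =
      (if i = j then (real (degree n E i))\<^sup>2 else 0) + of_bool (E i j)" if "i < n" "j < n" for i j
    using that simple_graphD[OF simple, of i j] simple_graphD[OF simple, of j i] simple_graph_irrefl[OF simple]
    by (cases "i = j") (auto simp: index_signless_laplacian power2_eq_square)
  have "mat_trace (?Q * ?Q) = (\<Sum>i<n. \<Sum>j<n. ?Q $$ (i, j) * ?Q $$ (j, i))"
    unfolding mat_trace_def using signless_laplacian_carrier[of n E]
    by (intro sum.cong refl index_mult_mat_sum[OF signless_laplacian_carrier signless_laplacian_carrier]) auto
  also have "\<dots> = (\<Sum>i<n. (real (degree n E i))\<^sup>2 + real (degree n E i))"
    by (intro sum.cong refl) (simp add: entry sum.distrib degree_eq_sum_of_bool[symmetric])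
  also have "\<dots> = real (first_zagreb n E) + 2 * real (num_edges n E)"
    unfolding first_zagreb_def sum.distrib sum_degree_real_eq_twice_num_edges[OF simple] by simp
  finally show ?thesis .
qed

lemma signless_laplacian_quadratic_form:
  "(\<Sum>i<n. \<Sum>j<n. v i * signless_laplacian n E $$ (i, j) * v j) =
   (\<Sum>i<n. \<Sum>j<n. of_bool (E i j) * (v i + v j)\<^sup>2) / 2"
proof -
  define b where "b i j = (of_bool (E i j) :: real)" for i j
  have b_sym: "b i j = b j i" for i j
    using simple_graphD(3)[OF simple, of i j] simple_graphD(3)[OF simple, of j i] unfolding b_def by auto
  have entry: "v i * signless_laplacian n E $$ (i, j) * v j =
      (if i = j then real (degree n E i) * (v i)\<^sup>2 else 0) + b i j * v i * v j"
    if "i < n" "j < n" for i j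
    using that by (simp add: index_signless_laplacian b_def algebra_simps power2_eq_square)
  have "(\<Sum>i<n. \<Sum>j<n. v i * signless_laplacian n E $$ (i, j) * v j) =
      (\<Sum>i<n. real (degree n E i) * (v i)\<^sup>2) + (\<Sum>i<n. \<Sum>j<n. b i j * v i * v j)"
    by (simp add: entry sum.distrib)
  also have "(\<Sum>i<n. real (degree n E i) * (v i)\<^sup>2) = (\<Sum>i<n. \<Sum>j<n. b i j * (v i)\<^sup>2)"
    unfolding degree_eq_sum_of_bool b_def by (simp add: sum_distrib_right)
  also have "(\<Sum>i<n. \<Sum>j<n. b i j * v i * v j) =
      ((\<Sum>i<n. \<Sum>j<n. b i j * (v i + v j)\<^sup>2) - (\<Sum>i<n. \<Sum>j<n. b i j * (v i)\<^sup>2)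
        - (\<Sum>i<n. \<Sum>j<n. b i j * (v j)\<^sup>2)) / 2"
    by (simp add: power2_sum sum.distrib sum_subtractf sum_distrib_left algebra_simps)
  also have "(\<Sum>i<n. \<Sum>j<n. b i j * (v j)\<^sup>2) = (\<Sum>i<n. \<Sum>j<n. b i j * (v i)\<^sup>2)"
    by (subst sum.swap) (simp add: b_sym)
  finally have "(\<Sum>i<n. \<Sum>j<n. v i * signless_laplacian n E $$ (i, j) * v j) =
      (\<Sum>i<n. \<Sum>j<n. b i j * (v i + v j)\<^sup>2) / 2"
    by (simp add: field_simps)
  then show ?thesis by (simp only: b_def)
qed

lemma signless_laplacian_eigenvalue_nonneg:
  assumes root: "poly (char_poly (signless_laplacian n E)) e = 0"
  shows "0 \<le> e"
proof -
  obtain v where v: "\<exists>i<n. v i \<noteq> 0"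
    and row: "\<And>i. i < n \<Longrightarrow> (\<Sum>j<n. signless_laplacian n E $$ (i, j) * v j) = e * v i"
    using char_poly_root_eigenvector[OF signless_laplacian_carrier root] by blast
  have "e * (\<Sum>i<n. (v i)\<^sup>2) = (\<Sum>i<n. v i * (e * v i))"
    by (simp add: sum_distrib_left power2_eq_square mult_ac)
  also have "\<dots> = (\<Sum>i<n. v i * (\<Sum>j<n. signless_laplacian n E $$ (i, j) * v j))"
    by (intro sum.cong refl) (simp add: row)
  also have "\<dots> = (\<Sum>i<n. \<Sum>j<n. of_bool (E i j) * (v i + v j)\<^sup>2) / 2"
    unfolding signless_laplacian_quadratic_form[symmetric] by (simp add: sum_distrib_left mult.assoc)
  also have "\<dots> \<ge> 0" by (intro divide_nonneg_pos sum_nonneg) auto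
  finally have "0 \<le> e * (\<Sum>i<n. (v i)\<^sup>2)" .
  moreover have "0 < (\<Sum>i<n. (v i)\<^sup>2)"
    using v by (auto intro!: sum_pos2)
  ultimately show ?thesis by (simp add: zero_le_mult_iff)
qed

end

section \<open>Balanced complete bipartite graphs\<close>

definition balanced_complete_bipartite :: "nat \<Rightarrow> (nat \<Rightarrow> nat \<Rightarrow> bool) \<Rightarrow> nat set \<Rightarrow> bool" where
  "balanced_complete_bipartite n E X \<longleftrightarrow> X \<subseteq> {..<n} \<and> n = 2 * card X \<and>
     (\<forall>u<n. \<forall>v<n. E u v \<longleftrightarrow> (u \<in> X \<longleftrightarrow> v \<notin> X))"

lemma balanced_complete_bipartite_card_side:
  assumes "balanced_complete_bipartite n E X"
  shows "card {j. j < n \<and> (j \<in> X) = b} = card X"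
proof -
  have X: "X \<subseteq> {..<n}" and n: "n = 2 * card X"
    using assms unfolding balanced_complete_bipartite_def by auto
  then have "card ({..<n} - X) = card X"
    by (metis card_Diff_subset card_lessThan finite_lessThan finite_subset mult_2 add_diff_cancel_right')
  moreover have "{j. j < n \<and> (j \<in> X) = b} = (if b then X else {..<n} - X)" using X by auto
  ultimately show ?thesis by simp
qed

lemma balanced_complete_bipartite_degree:
  assumes bip: "balanced_complete_bipartite n E X" and "u < n"
  shows "degree n E u = card X"
proof -
  have "{j. j < n \<and> E u j} = {j. j < n \<and> (j \<in> X) = (u \<notin> X)}"
    using bip \<open>u < n\<close> unfolding balanced_complete_bipartite_def by auto
  then show ?thesis
    unfolding degree_def using balanced_complete_bipartite_card_side[OF bip] by simp
qed

lemma balanced_complete_bipartiteI: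
  assumes cover: "X \<union> Y = {..<n}" and disjoint: "X \<inter> Y = {}" and "card X = card Y"
    and nbhd_X: "\<And>x. x \<in> X \<Longrightarrow> {j. j < n \<and> E x j} = Y"
    and nbhd_Y: "\<And>y. y \<in> Y \<Longrightarrow> {j. j < n \<and> E y j} = X"
  shows "balanced_complete_bipartite n E X"
  unfolding balanced_complete_bipartite_def
proof (intro conjI allI impI)
  show "X \<subseteq> {..<n}" using cover by auto
  have "finite X" "finite Y" using cover by (metis finite_Un finite_lessThan)+
  then have "n = card X + card Y" using card_Un_disjoint[of X Y] cover disjoint by simp
  then show "n = 2 * card X" using \<open>card X = card Y\<close> by simp
  fix u v assume "u < n" "v < n"
  then show "E u v \<longleftrightarrow> (u \<in> X \<longleftrightarrow> v \<notin> X)"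
    using nbhd_X[of u] nbhd_Y[of u] cover disjoint by blast
qed

lemma balanced_complete_bipartite_if_graph_iso:
  assumes "graph_iso {0..<n} E {0..<n div 2 + n div 2} (complete_bipartite_edge (n div 2) (n div 2))"
  obtains X where "balanced_complete_bipartite n E X"
proof -
  define h where "h = n div 2"
  obtain f where bij: "bij_betw f {0..<n} {0..<h + h}"
    and iso: "\<forall>u\<in>{0..<n}. \<forall>v\<in>{0..<n}. E u v \<longleftrightarrow> complete_bipartite_edge h h (f u) (f v)"
    using assms unfolding graph_iso_def h_def by blast
  define X where "X = {u. u < n \<and> f u < h}"
  have range: "f u < h + h" if "u < n" for u using bij_betwE[OF bij] that by simp
  have "f ` X = {0..<h}"
  proof
    show "f ` X \<subseteq> {0..<h}" unfolding X_def by auto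
    show "{0..<h} \<subseteq> f ` X"
    proof
      fix y assume "y \<in> {0..<h}"
      then have "y \<in> f ` {0..<n}" using bij_betw_imp_surj_on[OF bij] by simp
      then show "y \<in> f ` X" using \<open>y \<in> {0..<h}\<close> unfolding X_def by auto
    qed
  qed
  moreover have "inj_on f X"
    using bij_betw_imp_inj_on[OF bij] by (rule inj_on_subset) (auto simp: X_def)
  ultimately have "card X = h" by (metis card_atLeastLessThan card_image diff_zero)
  moreover have "n = h + h" using bij_betw_same_card[OF bij] by simp
  moreover have "E u v \<longleftrightarrow> (u \<in> X \<longleftrightarrow> v \<notin> X)" if "u < n" "v < n" for u v
    using iso that range[OF that(1)] range[OF that(2)]
    unfolding complete_bipartite_edge_def X_def by auto
  ultimately have "balanced_complete_bipartite n E X"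
    unfolding balanced_complete_bipartite_def by (auto simp: X_def)
  then show thesis by (rule that)
qed

lemma bij_betw_two_blocks:
  assumes "finite X" "finite Y" "X \<inter> Y = {}" "card X = h" "card Y = h"
  obtains f where "bij_betw f (X \<union> Y) {0..<h + h}" "\<And>u. u \<in> X \<union> Y \<Longrightarrow> f u < h \<longleftrightarrow> u \<in> X"
proof -
  obtain g1 where g1: "bij_betw g1 X {0..<h}" using ex_bij_betw_finite_nat[OF assms(1)] assms(4) by auto
  obtain g2 where g2: "bij_betw g2 Y {0..<h}" using ex_bij_betw_finite_nat[OF assms(2)] assms(5) by auto
  have "bij_betw ((+) h) {0..<h} {h..<h + h}" by (simp add: bij_betw_def)
  from bij_betw_trans[OF g2 this] have g2': "bij_betw (\<lambda>y. h + g2 y) Y {h..<h + h}"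
    by (simp add: comp_def)
  define f where "f u = (if u \<in> X then g1 u else h + g2 u)" for u
  have "bij_betw f (X \<union> Y) ({0..<h} \<union> {h..<h + h})"
    unfolding f_def by (rule bij_betw_disjoint_Un[OF g1 g2']) (use assms(3) in auto)
  moreover have "{0..<h} \<union> {h..<h + h} = {0..<h + h}" by auto
  moreover have "f u < h \<longleftrightarrow> u \<in> X" if "u \<in> X \<union> Y" for u
  proof (cases "u \<in> X")
    case True
    then show ?thesis using bij_betwE[OF g1] unfolding f_def by auto
  next
    case False
    with that have "u \<in> Y" by auto
    then show ?thesis using bij_betwE[OF g2'] False unfolding f_def by auto
  qed
  ultimately show thesis using that by simp
qed

lemma graph_iso_if_balanced_complete_bipartite:
  assumes bip: "balanced_complete_bipartite n E X"
  shows "even n \<and> graph_iso {0..<n} E {0..<n div 2 + n div 2} (complete_bipartite_edge (n div 2) (n div 2))"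
proof -
  define h where "h = card X"
  define Y where "Y = {..<n} - X"
  have X: "X \<subseteq> {..<n}" and n: "n = 2 * h"
    and edge: "\<And>u v. u < n \<Longrightarrow> v < n \<Longrightarrow> E u v \<longleftrightarrow> (u \<in> X \<longleftrightarrow> v \<notin> X)"
    using bip unfolding balanced_complete_bipartite_def h_def by auto
  have "Y = {j. j < n \<and> (j \<in> X) = False}" unfolding Y_def by auto
  then have "card Y = h" using balanced_complete_bipartite_card_side[OF bip, of False] unfolding h_def by simp
  moreover have "finite X" "finite Y" "X \<inter> Y = {}" using finite_subset[OF X] unfolding Y_def by auto
  ultimately obtain f where bij: "bij_betw f (X \<union> Y) {0..<h + h}"
    and side: "\<And>u. u \<in> X \<union> Y \<Longrightarrow> f u < h \<longleftrightarrow> u \<in> X"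
    using bij_betw_two_blocks[of X Y h] unfolding h_def by blast
  have XY: "X \<union> Y = {0..<n}" using X unfolding Y_def by auto
  have "\<forall>u\<in>{0..<n}. \<forall>v\<in>{0..<n}. E u v \<longleftrightarrow> complete_bipartite_edge h h (f u) (f v)"
  proof (intro ballI)
    fix u v assume "u \<in> {0..<n}" "v \<in> {0..<n}"
    then show "E u v \<longleftrightarrow> complete_bipartite_edge h h (f u) (f v)"
      using side[of u] side[of v] edge[of u v] bij_betwE[OF bij] XY
      unfolding complete_bipartite_edge_def by auto
  qed
  moreover have "n div 2 = h" "even n" using n by auto
  ultimately show ?thesis using bij XY unfolding graph_iso_def by metis
qed

lemma graph_iso_complete_bipartite_iff:
  "even n \<and> graph_iso {0..<n} E {0..<n div 2 + n div 2} (complete_bipartite_edge (n div 2) (n div 2))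
   \<longleftrightarrow> (\<exists>X. balanced_complete_bipartite n E X)"
  using balanced_complete_bipartite_if_graph_iso graph_iso_if_balanced_complete_bipartite by metis

lemma balanced_complete_bipartite_eigenvector:
  assumes bip: "balanced_complete_bipartite n E X" and "i < n"
    and row: "(\<Sum>j<n. signless_laplacian n E $$ (i, j) * v j) = e * v i"
  shows "(e - real (card X)) * v i = (\<Sum>j<n. if (j \<in> X) = (i \<notin> X) then v j else 0)"
proof -
  have "(\<Sum>j<n. signless_laplacian n E $$ (i, j) * v j) =
      (\<Sum>j<n. (if i = j then real (card X) * v j else 0) + (if (j \<in> X) = (i \<notin> X) then v j else 0))"
    using bip \<open>i < n\<close> balanced_complete_bipartite_degree[OF bip \<open>i < n\<close>]
    unfolding balanced_complete_bipartite_def by (intro sum.cong refl) (auto simp: index_signless_laplacian)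
  also have "\<dots> = real (card X) * v i + (\<Sum>j<n. if (j \<in> X) = (i \<notin> X) then v j else 0)"
    using \<open>i < n\<close> by (simp add: sum.distrib)
  finally show ?thesis using row by (simp add: algebra_simps)
qed

lemma balanced_complete_bipartite_eigenvalue:
  assumes bip: "balanced_complete_bipartite n E X"
    and root: "poly (char_poly (signless_laplacian n E)) e = 0"
  shows "e = real (card X) \<or> \<bar>e - real (card X)\<bar> = real (card X)"
proof -
  define h where "h = real (card X)"
  obtain v where v: "\<exists>i<n. v i \<noteq> 0"
    and row: "\<And>i. i < n \<Longrightarrow> (\<Sum>j<n. signless_laplacian n E $$ (i, j) * v j) = e * v i"
    using char_poly_root_eigenvector[OF signless_laplacian_carrier root] by blast
  define T where "T b = (\<Sum>j<n. if (j \<in> X) = b then v j else 0)" for b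
  have shifted_row: "(e - h) * v i = T (i \<notin> X)" if "i < n" for i
    using balanced_complete_bipartite_eigenvector[OF bip that row[OF that]] unfolding T_def h_def .
  have side_sum: "(e - h) * T b = h * T (\<not> b)" for b
  proof -
    have "(e - h) * T b = (\<Sum>j<n. if (j \<in> X) = b then T (\<not> b) else 0)"
      unfolding T_def sum_distrib_left using shifted_row by (intro sum.cong refl) (auto simp: T_def)
    also have "\<dots> = real (card {j. j < n \<and> (j \<in> X) = b}) * T (\<not> b)"
      by (simp add: sum.If_cases Int_def conj_commute)
    finally show ?thesis using balanced_complete_bipartite_card_side[OF bip] unfolding h_def by simp
  qed
  show ?thesis
  proof (cases "e = h")
    case False
    obtain b where b: "T b \<noteq> 0"
    proof (rule ccontr)
      assume "\<not> thesis"
      then have "T b = 0" for b using that by blast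
      then have "v i = 0" if "i < n" for i using shifted_row[OF that] False by simp
      then show False using v by blast
    qed
    have "(e - h)\<^sup>2 * T b = h * ((e - h) * T (\<not> b))"
      using side_sum[of b] by (simp add: power2_eq_square mult_ac)
    also have "\<dots> = h\<^sup>2 * T b"
      using side_sum[of "\<not> b"] by (simp add: power2_eq_square)
    finally have "(e - h)\<^sup>2 = h\<^sup>2" using b by simp
    then have "\<bar>e - h\<bar> = \<bar>h\<bar>" by (metis real_sqrt_abs)
    then show ?thesis unfolding h_def by simp
  qed (simp add: h_def)
qed

lemma regular_cube_neighbours_adjacent:
  assumes simple: "simple_graph n E" and regular: "\<And>i. i < n \<Longrightarrow> degree n E i = r"
    and cube: "\<And>i j. i < n \<Longrightarrow> j < n \<Longrightarrow>
      (\<Sum>k<n. \<Sum>l<n. of_bool (E i k) * of_bool (E k l) * of_bool (E l j)) = (real r)\<^sup>2 * of_bool (E i j)"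
    and "E a b" "E b k" "E l a"
  shows "E k l"
proof -
  define A where "A i j = (of_bool (E i j) :: real)" for i j
  have ab: "a < n" "b < n" "E b a" using simple_graphD[OF simple \<open>E a b\<close>] by auto
  have kl: "k < n" "l < n" using simple_graphD[OF simple] \<open>E b k\<close> \<open>E l a\<close> by auto
  have row_sum: "(\<Sum>k<n. A i k) = real r" if "i < n" for i
    using degree_eq_sum_of_bool[of n E i] regular[OF that] unfolding A_def by simp
  have col_sum: "(\<Sum>l<n. A l i) = real r" if "i < n" for i
  proof -
    have "(\<Sum>l<n. A l i) = (\<Sum>l<n. A i l)"
      using simple_graphD(3)[OF simple] unfolding A_def by (intro sum.cong refl) auto
    then show ?thesis using row_sum[OF that] by simp
  qed
  \<comment> \<open>There are \<open>r\<^sup>2\<close> pairs \<open>(k, l)\<close> with \<open>E b k\<close> and \<open>E l a\<close>, and by the cube identity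
    all of them are walks \<open>b, k, l, a\<close>.\<close>
  define t where "t k l = A b k * A l a * (1 - A k l)" for k l
  have "(\<Sum>k<n. \<Sum>l<n. t k l) =
      (\<Sum>k<n. A b k) * (\<Sum>l<n. A l a) - (\<Sum>k<n. \<Sum>l<n. A b k * A k l * A l a)"
    unfolding t_def by (simp add: sum_product sum_subtractf algebra_simps)
  also have "\<dots> = 0"
    using row_sum[OF ab(2)] col_sum[OF ab(1)] cube[OF ab(2,1)] ab(3)
    unfolding A_def by (simp add: power2_eq_square)
  finally have sum_t: "(\<Sum>k<n. \<Sum>l<n. t k l) = 0" .
  have t_nonneg: "0 \<le> t k l" for k l unfolding t_def A_def by simp
  have "\<forall>k\<in>{..<n}. (\<Sum>l<n. t k l) = 0"
    using sum_t t_nonneg by (subst sum_nonneg_eq_0_iff[symmetric]) (auto intro: sum_nonneg)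
  then have "\<forall>l\<in>{..<n}. t k l = 0"
    using kl t_nonneg by (subst sum_nonneg_eq_0_iff[symmetric]) auto
  then have "t k l = 0" using kl by auto
  then show "E k l" using \<open>E b k\<close> \<open>E l a\<close> unfolding t_def A_def by (auto split: if_splits)
qed

lemma balanced_complete_bipartite_if_regular_cube:
  assumes simple: "simple_graph n E" and conn: "connected_graph n E" and "1 < n"
    and regular: "\<And>i. i < n \<Longrightarrow> degree n E i = r"
    and cube: "\<And>i j. i < n \<Longrightarrow> j < n \<Longrightarrow>
      (\<Sum>k<n. \<Sum>l<n. of_bool (E i k) * of_bool (E k l) * of_bool (E l j)) = (real r)\<^sup>2 * of_bool (E i j)"
  obtains X where "balanced_complete_bipartite n E X"
proof -
  define a :: nat where "a = 0"
  have "a < n" using \<open>1 < n\<close> unfolding a_def by simp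
  obtain b where "E a b" using connected_graph_has_neighbour[OF simple conn \<open>1 < n\<close> \<open>a < n\<close>] .
  note adjacent = regular_cube_neighbours_adjacent[OF simple regular cube \<open>E a b\<close>]
  have "b < n" "E b a" using simple_graphD[OF simple \<open>E a b\<close>] by auto
  define X where "X = {k. k < n \<and> E b k}"
  define Y where "Y = {l. l < n \<and> E a l}"
  have card_X: "card X = r" and card_Y: "card Y = r"
    using regular \<open>a < n\<close> \<open>b < n\<close> unfolding X_def Y_def degree_def by auto
  have nbhd_X: "{j. j < n \<and> E x j} = Y" if "x \<in> X" for x
  proof (rule card_subset_eq[symmetric])
    show "Y \<subseteq> {j. j < n \<and> E x j}"
      using that adjacent simple_graphD(3)[OF simple] unfolding X_def Y_def by blast
    show "card Y = card {j. j < n \<and> E x j}"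
      using card_Y regular that unfolding X_def degree_def by auto
  qed simp
  have nbhd_Y: "{j. j < n \<and> E y j} = X" if "y \<in> Y" for y
  proof (rule card_subset_eq[symmetric])
    show "X \<subseteq> {j. j < n \<and> E y j}"
      using that adjacent simple_graphD(3)[OF simple] unfolding X_def Y_def by blast
    show "card X = card {j. j < n \<and> E y j}"
      using card_X regular that unfolding Y_def degree_def by auto
  qed simp
  have disjoint: "X \<inter> Y = {}"
    using adjacent simple_graphD(3,4)[OF simple] unfolding X_def Y_def by blast
  have "{..<n} \<subseteq> X \<union> Y"
  proof (rule connected_graph_closed_subset[OF conn \<open>a < n\<close>])
    show "a \<in> X \<union> Y" using \<open>E b a\<close> \<open>a < n\<close> unfolding X_def by simp
    fix u v assume "u \<in> X \<union> Y" "E u v"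
    moreover have "v < n" using simple_graphD[OF simple \<open>E u v\<close>] by simp
    ultimately show "v \<in> X \<union> Y" using nbhd_X nbhd_Y by blast
  qed
  then have cover: "X \<union> Y = {..<n}" unfolding X_def Y_def by auto
  show thesis
    by (rule that, rule balanced_complete_bipartiteI[OF cover disjoint _ nbhd_X nbhd_Y])
      (simp add: card_X card_Y)
qed

section \<open>The spectrum of the signless Laplacian\<close>

locale signless_laplacian_triangularization = triangularization n P P' es
  for n :: nat and P P' :: "real mat" and es :: "real list" +
  fixes E :: "nat \<Rightarrow> nat \<Rightarrow> bool"
  assumes simple: "simple_graph n E" and connected: "connected_graph n E" and two_le_n: "2 \<le> n"
    and char_poly_Q: "char_poly (signless_laplacian n E) = (\<Prod>e\<leftarrow>es. [:-e, 1:])"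
    and triangular_form_Q: "triangular_form (signless_laplacian n E) (\<lambda>x. x)"
begin

abbreviation "Q \<equiv> signless_laplacian n E"
abbreviation "m \<equiv> real (num_edges n E)"
abbreviation "d \<equiv> avg_deg n E"
abbreviation "\<gamma> \<equiv> gamma_max n E"

lemma Q_eigenvalues_eq: "Q_eigenvalues n E = mset es"
  unfolding Q_eigenvalues_def char_poly_Q by (rule proots_prod_linear)

lemma char_poly_Q_root: "e \<in> set es \<Longrightarrow> poly (char_poly Q) e = 0"
  unfolding char_poly_Q by (rule linear_poly_root)

lemma QE_eq: "QE n E = (\<Sum>e\<leftarrow>es. \<bar>e - d\<bar>)"
  unfolding QE_def Q_eigenvalues_eq by (metis mset_map sum_mset_sum_list)

lemma gamma_max_ge: "e \<in> set es \<Longrightarrow> \<bar>e - d\<bar> \<le> \<gamma>"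
  unfolding gamma_max_def Q_eigenvalues_eq set_mset_mset by (intro Max_ge finite_imageI imageI) simp_all

lemma gamma_max_attained: obtains e where "e \<in> set es" "\<bar>e - d\<bar> = \<gamma>"
proof -
  have "set es \<noteq> {}" using length_es two_le_n by auto
  then have "\<gamma> \<in> (\<lambda>e. \<bar>e - d\<bar>) ` set es"
    unfolding gamma_max_def Q_eigenvalues_eq set_mset_mset by (intro Max_in finite_imageI) simp_all
  then obtain e where "\<gamma> = \<bar>e - d\<bar>" "e \<in> set es" by (rule imageE)
  then show thesis by (intro that[of e]) simp_all
qed

lemma avg_deg_eq: "real n * d = 2 * m"
  unfolding avg_deg_def using two_le_n by simp

lemma sum_eigenvalues: "(\<Sum>e\<leftarrow>es. e) = 2 * m"
  using mat_trace_triangular_form[OF triangular_form_Q] mat_trace_signless_laplacian[OF simple] by simp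

lemma sum_eigenvalues_power2: "(\<Sum>e\<leftarrow>es. e\<^sup>2) = real (first_zagreb n E) + 2 * m"
proof -
  have "triangular_form (Q * Q) (\<lambda>x. x * x)"
    by (rule triangular_form_mult[OF triangular_form_Q triangular_form_Q])
  from mat_trace_triangular_form[OF this] show ?thesis
    using mat_trace_signless_laplacian_square[OF simple] by (simp add: power2_eq_square)
qed

lemma sum_deviation: "(\<Sum>e\<leftarrow>es. e - d) = 0"
  using sum_eigenvalues avg_deg_eq length_es by (simp add: sum_list_subtractf sum_list_triv)

lemma sum_deviation_power2:
  "(\<Sum>e\<leftarrow>es. (e - d)\<^sup>2) = 2 * m + real (first_zagreb n E) - 4 * m\<^sup>2 / real n"
proof -
  have "(\<Sum>e\<leftarrow>es. (e - d)\<^sup>2) = (\<Sum>e\<leftarrow>es. e\<^sup>2) - 2 * d * (\<Sum>e\<leftarrow>es. e) + real n * d\<^sup>2"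
    using length_es by (simp add: sum_list_power2_diff)
  then show ?thesis
    unfolding sum_eigenvalues sum_eigenvalues_power2 avg_deg_def using two_le_n
    by (simp add: field_simps power2_eq_square)
qed

lemma sum_deviation_power2_pos: "0 < (\<Sum>e\<leftarrow>es. (e - d)\<^sup>2)"
proof -
  have "(\<Sum>i<n. real (degree n E i))\<^sup>2 \<le> real n * (\<Sum>i<n. (real (degree n E i))\<^sup>2)"
    by (rule power2_sum_le_card_mult_sum_power2)
  then have "4 * m\<^sup>2 / real n \<le> real (first_zagreb n E)"
    using two_le_n unfolding sum_degree_real_eq_twice_num_edges[OF simple] first_zagreb_def
    by (simp add: field_simps power_mult_distrib)
  moreover have "0 < m" using num_edges_pos[OF simple connected] two_le_n by simp
  ultimately show ?thesis unfolding sum_deviation_power2 by linarith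
qed

lemma gamma_max_pos: "0 < \<gamma>"
proof (rule ccontr)
  assume "\<not> 0 < \<gamma>"
  then have "(e - d)\<^sup>2 = 0" if "e \<in> set es" for e using gamma_max_ge[OF that] by simp
  then have "(\<Sum>e\<leftarrow>es. (e - d)\<^sup>2) = 0" by (subst sum_list_nonneg_eq_0_iff) auto
  then show False using sum_deviation_power2_pos by simp
qed

lemma QE_ge: "(\<Sum>e\<leftarrow>es. (e - d)\<^sup>2) / \<gamma> \<le> QE n E"
  using sum_list_power2_le_sum_list_abs_mult(1)[of es "\<lambda>e. e - d", OF gamma_max_ge] gamma_max_pos
  unfolding QE_eq by (simp add: divide_le_eq)

abbreviation "deviations_two_valued \<equiv> \<forall>e\<in>set es. e = d \<or> \<bar>e - d\<bar> = \<gamma>"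

lemma QE_eq_iff: "QE n E = (\<Sum>e\<leftarrow>es. (e - d)\<^sup>2) / \<gamma> \<longleftrightarrow> deviations_two_valued"
  using sum_list_power2_le_sum_list_abs_mult(2)[of es "\<lambda>e. e - d", OF gamma_max_ge] gamma_max_pos
  unfolding QE_eq by (auto simp: field_simps)

abbreviation "N \<equiv> Q + (- d) \<cdot>\<^sub>m 1\<^sub>m n"

lemma N_carrier: "N \<in> carrier_mat n n"
  using signless_laplacian_carrier by simp

lemma transpose_N: "transpose_mat N = N"
proof (rule eq_matI)
  fix i j assume "i < dim_row N" "j < dim_col N"
  then have "i < n" "j < n" using N_carrier by auto
  then show "transpose_mat N $$ (i, j) = N $$ (i, j)"
    using symmetric_matD[OF transpose_signless_laplacian[OF simple] signless_laplacian_carrier, of j i]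
    by (simp add: signless_laplacian_carrier)
qed (use N_carrier in auto)

lemma index_N: "i < n \<Longrightarrow> j < n \<Longrightarrow> N $$ (i, j) = (if i = j then real (degree n E i) - d else 0) + of_bool (E i j)"
  using signless_laplacian_carrier by (simp add: index_signless_laplacian)

lemma gamma_max_le_avg_deg:
  assumes two_valued: deviations_two_valued
  shows "\<gamma> \<le> d"
proof -
  have "\<exists>e\<in>set es. e < d"
  proof (rule ccontr)
    assume "\<not> (\<exists>e\<in>set es. e < d)"
    then have "0 \<le> e - d" if "e \<in> set es" for e using that by force
    then have "(\<Sum>e\<leftarrow>es. e - d) = 0 \<longleftrightarrow> (\<forall>x\<in>set (map (\<lambda>e. e - d) es). x = 0)"
      by (intro sum_list_nonneg_eq_0_iff) auto
    then have "\<forall>e\<in>set es. e - d = 0" using sum_deviation by simp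
    moreover obtain e where "e \<in> set es" "\<bar>e - d\<bar> = \<gamma>" by (rule gamma_max_attained)
    ultimately show False using gamma_max_pos by simp
  qed
  then obtain e where e: "e \<in> set es" "e < d" by auto
  then have "d - e = \<gamma>" using two_valued by force
  moreover have "0 \<le> e"
    by (rule signless_laplacian_eigenvalue_nonneg[OF simple char_poly_Q_root[OF e(1)]])
  ultimately show ?thesis by linarith
qed

lemma cube_N:
  assumes two_valued: deviations_two_valued
  shows "N * N * N = \<gamma>\<^sup>2 \<cdot>\<^sub>m N"
proof -
  define R where "R = N * N * N + (- \<gamma>\<^sup>2) \<cdot>\<^sub>m N"
  define f where "f x = (x + - d * 1) * (x + - d * 1) * (x + - d * 1) + - \<gamma>\<^sup>2 * (x + - d * 1)" for x
  have R: "R \<in> carrier_mat n n" unfolding R_def using N_carrier by simp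
  have N: "triangular_form N (\<lambda>x. x + - d * 1)"
    by (intro triangular_form_add triangular_form_Q triangular_form_smult triangular_form_one)
  have "triangular_form R f"
    unfolding R_def f_def
    by (rule triangular_form_add[OF triangular_form_mult[OF triangular_form_mult[OF N N] N] triangular_form_smult[OF N]])
  then have "mat_trace (R * R) = (\<Sum>e\<leftarrow>es. f e * f e)"
    by (intro mat_trace_triangular_form triangular_form_mult)
  also have "\<dots> = (\<Sum>e\<leftarrow>es. 0)"
  proof (intro arg_cong[of _ _ sum_list] map_cong refl)
    fix e assume "e \<in> set es"
    then have "e - d = 0 \<or> (e - d)\<^sup>2 = \<gamma>\<^sup>2" using two_valued by (metis power2_abs right_minus_eq)
    moreover have "f e = (e - d) * ((e - d)\<^sup>2 - \<gamma>\<^sup>2)"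
      unfolding f_def by (simp add: power2_eq_square algebra_simps)
    ultimately show "f e * f e = 0" by auto
  qed
  finally have trace_R_R: "mat_trace (R * R) = 0" by simp
  have "transpose_mat R = transpose_mat (N * N * N) + transpose_mat ((- \<gamma>\<^sup>2) \<cdot>\<^sub>m N)"
    unfolding R_def by (rule transpose_add) (use N_carrier in auto)
  then have "transpose_mat R = R"
    unfolding transpose_mat_cube[OF N_carrier transpose_N] transpose_smult_mat transpose_N R_def .
  from symmetric_mat_eq_0_if_trace_square_eq_0[OF R this trace_R_R] show ?thesis
    unfolding R_def by (rule eq_smult_if_add_smult_eq_0) (use N_carrier in auto)
qed

lemma regular_if_two_valued:
  assumes two_valued: deviations_two_valued
  shows "\<And>i. i < n \<Longrightarrow> real (degree n E i) = d" and "\<gamma> = d"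
proof -
  define u where "u i = (\<Sum>j<n. N $$ (i, j))" for i
  have u_eq: "u i = 2 * real (degree n E i) - d" if "i < n" for i
  proof -
    have "u i = (\<Sum>j<n. (if i = j then real (degree n E i) - d else 0)) + (\<Sum>j<n. of_bool (E i j))"
      unfolding u_def sum.distrib[symmetric] by (intro sum.cong refl) (simp only: index_N[OF that] lessThan_iff)
    then show ?thesis using that by (simp add: degree_eq_sum_of_bool[symmetric])
  qed
  have sum_u: "(\<Sum>i<n. u i) = real n * d"
    using avg_deg_eq sum_degree_real_eq_twice_num_edges[OF simple]
    by (simp add: u_eq sum_subtractf sum_distrib_left[symmetric])
  have "(\<Sum>i<n. (u i - d)\<^sup>2) = (\<Sum>i<n. (u i)\<^sup>2) - 2 * d * (\<Sum>i<n. u i) + real n * d\<^sup>2"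
    by (simp add: power2_diff sum.distrib sum_subtractf sum_distrib_left mult.assoc mult.commute mult.left_commute)
  also have "\<dots> = (\<Sum>i<n. (u i)\<^sup>2) - real n * d\<^sup>2"
    unfolding sum_u by (simp add: power2_eq_square)
  also have "\<dots> \<le> real n * \<gamma>\<^sup>2 - real n * d\<^sup>2"
    using sum_row_sums_power2_le_if_cube_eq[OF N_carrier transpose_N cube_N[OF two_valued]] gamma_max_pos
    unfolding u_def by simp
  finally have deviation: "(\<Sum>i<n. (u i - d)\<^sup>2) \<le> real n * (\<gamma>\<^sup>2 - d\<^sup>2)"
    by (simp add: right_diff_distrib)
  have "\<gamma>\<^sup>2 \<le> d\<^sup>2"
    using gamma_max_le_avg_deg[OF two_valued] gamma_max_pos by (intro power_mono) auto
  then have "real n * (\<gamma>\<^sup>2 - d\<^sup>2) \<le> 0" by (intro mult_nonneg_nonpos) auto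
  moreover have "0 \<le> (\<Sum>i<n. (u i - d)\<^sup>2)" by (intro sum_nonneg) auto
  ultimately have "(\<Sum>i<n. (u i - d)\<^sup>2) = 0" and "real n * (\<gamma>\<^sup>2 - d\<^sup>2) = 0"
    using deviation by linarith+
  then have "\<gamma>\<^sup>2 = d\<^sup>2" and u_d: "\<forall>i\<in>{..<n}. (u i - d)\<^sup>2 = 0"
    using two_le_n by (auto simp: sum_nonneg_eq_0_iff)
  then show "\<gamma> = d"
    using gamma_max_pos gamma_max_le_avg_deg[OF two_valued] by (metis power2_eq_iff_nonneg less_imp_le order.trans)
  show "real (degree n E i) = d" if "i < n" for i
    using u_d u_eq[OF that] that by simp
qed

lemma balanced_complete_bipartite_if_two_valued:
  assumes two_valued: deviations_two_valued
  obtains X where "balanced_complete_bipartite n E X"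
proof -
  define r where "r = degree n E 0"
  have d_r: "d = real r" using regular_if_two_valued(1)[OF two_valued, of 0] two_le_n unfolding r_def by simp
  have regular: "degree n E i = r" if "i < n" for i
    using regular_if_two_valued(1)[OF two_valued that] d_r by simp
  have N_adj: "N $$ (i, j) = of_bool (E i j)" if "i < n" "j < n" for i j
    using that regular d_r simple_graph_irrefl[OF simple] by (subst index_N[OF that]) simp
  have cube: "(\<Sum>k<n. \<Sum>l<n. of_bool (E i k) * of_bool (E k l) * of_bool (E l j)) = (real r)\<^sup>2 * of_bool (E i j)"
    if "i < n" "j < n" for i j
  proof -
    have "(\<Sum>k<n. \<Sum>l<n. of_bool (E i k) * of_bool (E k l) * of_bool (E l j)) = (N * N * N) $$ (i, j)"
      unfolding index_mult_mat_cube[OF N_carrier that] using that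
      by (intro sum.cong refl) (simp only: N_adj lessThan_iff)
    also have "\<dots> = (\<gamma>\<^sup>2 \<cdot>\<^sub>m N) $$ (i, j)" by (simp only: cube_N[OF two_valued])
    also have "\<dots> = \<gamma>\<^sup>2 * N $$ (i, j)" by (rule index_smult_mat(1)) (use that N_carrier in auto)
    also have "\<dots> = (real r)\<^sup>2 * of_bool (E i j)"
      using regular_if_two_valued(2)[OF two_valued] d_r N_adj[OF that] by simp
    finally show ?thesis .
  qed
  have "1 < n" using two_le_n by simp
  obtain X where "balanced_complete_bipartite n E X"
    using balanced_complete_bipartite_if_regular_cube[OF simple connected \<open>1 < n\<close> regular cube] .
  then show thesis by (rule that)
qed

lemma two_valued_if_balanced_complete_bipartite:
  assumes bip: "balanced_complete_bipartite n E X"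
  shows deviations_two_valued
proof -
  have "2 * m = real n * real (card X)"
    using sum_degree_real_eq_twice_num_edges[OF simple] balanced_complete_bipartite_degree[OF bip] by simp
  then have d: "d = real (card X)" using avg_deg_eq two_le_n by simp
  have spectrum: "e = d \<or> \<bar>e - d\<bar> = real (card X)" if "e \<in> set es" for e
    using balanced_complete_bipartite_eigenvalue[OF bip char_poly_Q_root[OF that]] d by simp
  obtain e where "e \<in> set es" "\<bar>e - d\<bar> = \<gamma>" by (rule gamma_max_attained)
  then have "\<gamma> = real (card X)" using spectrum gamma_max_pos by force
  then show ?thesis using spectrum by simp
qed

lemma two_valued_iff_balanced_complete_bipartite:
  "deviations_two_valued \<longleftrightarrow> (\<exists>X. balanced_complete_bipartite n E X)"
  using balanced_complete_bipartite_if_two_valued two_valued_if_balanced_complete_bipartite by metis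

end

theorem mainTheorem10:
  fixes n :: nat and E :: "nat \<Rightarrow> nat \<Rightarrow> bool"
  assumes "simple_graph n E" and "connected_graph n E" and "n \<ge> 2"
    and "gamma_min n E = 0"
  shows "QE n E \<ge> (2 * real (num_edges n E) + real (first_zagreb n E)
                    - 4 * (real (num_edges n E))^2 / real n) / gamma_max n E \<and>
         (QE n E = (2 * real (num_edges n E) + real (first_zagreb n E)
                    - 4 * (real (num_edges n E))^2 / real n) / gamma_max n E
         \<longleftrightarrow> even n \<and> graph_iso {0..<n} E {0..<n div 2 + n div 2}
                 (complete_bipartite_edge (n div 2) (n div 2)))"
proof -
  obtain es P P' where "triangularization n P P' es"
    and "char_poly (signless_laplacian n E) = (\<Prod>e\<leftarrow>es. [:-e, 1:])"
    and "triangularization.triangular_form n P P' es (signless_laplacian n E) (\<lambda>x. x)"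
    using real_symmetric_triangularization[OF signless_laplacian_carrier transpose_signless_laplacian[OF assms(1)]] .
  then interpret signless_laplacian_triangularization n P P' es E
    using assms(1-3)
    by (simp add: signless_laplacian_triangularization_def signless_laplacian_triangularization_axioms_def)
  show ?thesis
    using QE_ge QE_eq_iff two_valued_iff_balanced_complete_bipartite graph_iso_complete_bipartite_iff
    unfolding sum_deviation_power2 by simp
qed

end
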